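(* (Completeness.) For every finite multiset $\Gamma$ of ILL formulae and every ILL formula $\varphi$: if $\Gamma\Vdash\varphi$ (i.e. $\Gamma\Vdash^{\varnothing}_{\mathcal{B}}\varphi$ for every base $\mathcal{B}$), then $\Gamma\vdash\varphi$ is derivable in $\mathrm{N_{ILL}}$.
   Context: Fix a set $\mathbb{A}$ of propositional atoms. ILL formulae: $\phi ::= p\in\mathbb{A} \mid \top \mid 0 \mid 1 \mid \phi\multimap\phi \mid \phi\otimes\phi \mid \phi\,\&\,\phi \mid \phi\oplus\phi \mid\ !\phi$. All multisets are finite; "$\Gamma,\Delta$" denotes multiset union. Natural deduction $\mathrm{N_{ILL}}$: $\Gamma\vdash\varphi$ is defined inductively by: (Ax) $\varphi\vdash\varphi$; ($\multimap$I) from $\Gamma,\phi\vdash\psi$ infer $\Gamma\vdash\phi\multimap\psi$; ($\multimap$E) from $\Gamma\vdash\phi\multimap\psi$ and $\Delta\vdash\phi$ infer $\Gamma,\Delta\vdash\psi$; ($\otimes$I) from $\Gamma\vdash\phi$, $\Delta\vdash\psi$ infer $\Gamma,\Delta\vdash\phi\otimes\psi$; ($\otimes$E) from $\Gamma\vdash\phi\otimes\psi$ and $\Delta,\phi,\psi\vdash\chi$ infer $\Gamma,\Delta\vdash\chi$; ($1$I) $\vdash 1$; ($1$E) from $\Gamma\vdash 1$, $\Delta\vdash\phi$ infer $\Gamma,\Delta\vdash\phi$; ($\&$I) from $\Gamma\vdash\phi$, $\Gamma\vdash\psi$ infer $\Gamma\vdash\phi\&\psi$; ($\&$E) from $\Gamma\vdash\phi\&\psi$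 infer $\Gamma\vdash\phi$ and infer $\Gamma\vdash\psi$; ($\oplus$I) from $\Gamma\vdash\phi$ (or $\Gamma\vdash\psi$) infer $\Gamma\vdash\phi\oplus\psi$; ($\oplus$E) from $\Gamma\vdash\phi\oplus\psi$, $\Delta,\phi\vdash\chi$, $\Delta,\psi\vdash\chi$ infer $\Gamma,\Delta\vdash\chi$; ($\top$I) for $n\ge0$, from $\Gamma_i\vdash\phi_i$ ($i=1..n$) infer $\Gamma_1,\dots,\Gamma_n\vdash\top$; ($0$E) for $n\ge 0$, from $\Gamma_i\vdash\phi_i$ ($i=1..n$) and $\Delta\vdash 0$ infer $\Gamma_1,\dots,\Gamma_n,\Delta\vdash\chi$; (Prom$_n$) for $n\ge0$, from $\Gamma_i\vdash\,!\psi_i$ ($i=1..n$) and $!\psi_1,\dots,!\psi_n\vdash\phi$ infer $\Gamma_1,\dots,\Gamma_n\vdash\,!\phi$; (Der) from $\Gamma\vdash\,!\phi$, $\Delta,\phi\vdash\psi$ infer $\Gamma,\Delta\vdash\psi$; (Wk) from $\Gamma\vdash\,!\phi$, $\Delta\vdash\psi$ infer $\Gamma,\Delta\vdash\psi$; (Ctr) from $\Gamma\vdash\,!\phi$, $\Delta,!\phi,!\phi\vdash\psi$ infer $\Gamma,\Delta\vdash\psi$. Atomic rules and bases: an atomic sequent is $P\Rightarrow p$ with $P$ a multiset of atoms, $p$ an atom. An atomic box is a multiset of atomic sequents. An atomic rule is a triple $\langle\mathbf{A},\mathbf{S},p\rangle$ with $\mathbf{A}$ a multiset of atomic boxes, $\mathbf{S}$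 an atomic box, $p$ an atom. A base is a set of atomic rules. An atom $p$ is persistent in $\mathcal{B}$ if some $\langle\varnothing,\mathbf{S},p\rangle\in\mathcal{B}$ has $\mathbf{S}\neq\varnothing$. Derivability $\vdash_{\mathcal{B}}$ between atomic multisets and atoms is defined inductively: (Ref) $p\vdash_{\mathcal{B}}p$; (App) if $\langle\mathbf{A},\mathbf{S},p\rangle\in\mathcal{B}$ with $\mathbf{A}=\{\mathbf{T}_1,\dots,\mathbf{T}_m\}$, and there are atomic multisets $C_1,\dots,C_n$ ($n\ge m$) and a multiset $D=\{d_{m+1},\dots,d_n\}$ of atoms persistent in $\mathcal{B}$ such that $C_i,Q\vdash_{\mathcal{B}}q$ for every $i\le m$ and every $Q\Rightarrow q\in\mathbf{T}_i$, $C_j\vdash_{\mathcal{B}}d_j$ for every $m<j\le n$, and $D,U\vdash_{\mathcal{B}}v$ for every $U\Rightarrow v\in\mathbf{S}$, then $C_1,\dots,C_n\vdash_{\mathcal{B}}p$. Support $\Vdash^L_{\mathcal{B}}$ (base $\mathcal{B}$, atomic multiset $L$), defined by induction on formulae: $\Vdash^L_{\mathcal{B}}p$ iff $L\vdash_{\mathcal{B}}p$; $\Vdash^L_{\mathcal{B}}\varphi\multimap\psi$ iff $\varphi\Vdash^L_{\mathcal{B}}\psi$; $\Vdash^L_{\mathcal{B}}\varphi\otimes\psi$ iff for all $\mathcal{C}\supseteq\mathcal{B}$, atomic multisets $K$, atoms $p$: if $\varphi,\psi\Vdash^K_{\mathcal{C}}p$ then $\Vdash^{L,K}_{\mathcal{C}}p$;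 $\Vdash^L_{\mathcal{B}}1$ iff for all $\mathcal{C}\supseteq\mathcal{B}$, $K$, $p$: if $\Vdash^K_{\mathcal{C}}p$ then $\Vdash^{L,K}_{\mathcal{C}}p$; $\Vdash^L_{\mathcal{B}}\varphi\&\psi$ iff $\Vdash^L_{\mathcal{B}}\varphi$ and $\Vdash^L_{\mathcal{B}}\psi$; $\Vdash^L_{\mathcal{B}}\varphi\oplus\psi$ iff for all $\mathcal{C}\supseteq\mathcal{B}$, $K$, $p$: if $\varphi\Vdash^K_{\mathcal{C}}p$ and $\psi\Vdash^K_{\mathcal{C}}p$ then $\Vdash^{L,K}_{\mathcal{C}}p$; $\Vdash^L_{\mathcal{B}}0$ iff $\Vdash^{L,K}_{\mathcal{B}}p$ for all atoms $p$ and atomic multisets $K$; $\Vdash^L_{\mathcal{B}}\top$ always; $\Vdash^L_{\mathcal{B}}!\varphi$ iff for all $\mathcal{C}\supseteq\mathcal{B}$, $K$, $p$: if (for all $\mathcal{D}\supseteq\mathcal{C}$, $\Vdash^{\varnothing}_{\mathcal{D}}\varphi$ implies $\Vdash^K_{\mathcal{D}}p$) then $\Vdash^{L,K}_{\mathcal{C}}p$. For nonempty multisets: $\Vdash^L_{\mathcal{B}}\Gamma,\Delta$ iff $L=K,M$ for some $K,M$ with $\Vdash^K_{\mathcal{B}}\Gamma$ and $\Vdash^M_{\mathcal{B}}\Delta$. For a nonempty antecedent written as $!\Delta,\Theta$, where $!\Delta$ collects the formulae whose top-level connective is $!$ (with $\Delta$ the formulae under those $!$) and $\Theta$ contains none: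 $!\Delta,\Theta\Vdash^L_{\mathcal{B}}\varphi$ iff for all $\mathcal{C}\supseteq\mathcal{B}$ and atomic $K$, if $\Vdash^{\varnothing}_{\mathcal{C}}\delta$ for every $\delta\in\Delta$ and $\Vdash^K_{\mathcal{C}}\Theta$ then $\Vdash^{L,K}_{\mathcal{C}}\varphi$ (when $\Theta$ is empty, $K$ is empty). An empty antecedent: $\varnothing\Vdash^L_{\mathcal{B}}\varphi$ means $\Vdash^L_{\mathcal{B}}\varphi$. A sequent $(\Gamma:\varphi)$ is valid, written $\Gamma\Vdash\varphi$, iff $\Gamma\Vdash^{\varnothing}_{\mathcal{B}}\varphi$ for all bases $\mathcal{B}$. *)

theory Defs
  imports Main "HOL-Library.Multiset"
begin

datatype 'a form =
    Atom 'a
  | Top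
  | Zero
  | One
  | Lolli "'a form" "'a form"
  | Tensor "'a form" "'a form"
  | With "'a form" "'a form"
  | Plus "'a form" "'a form"
  | Bang "'a form"

inductive nd :: "'a form multiset \<Rightarrow> 'a form \<Rightarrow> bool" where
  Ax: "nd {#\<phi>#} \<phi>"
| LolliI: "nd (add_mset \<phi> \<Gamma>) \<psi> \<Longrightarrow> nd \<Gamma> (Lolli \<phi> \<psi>)"
| LolliE: "nd \<Gamma> (Lolli \<phi> \<psi>) \<Longrightarrow> nd \<Delta> \<phi> \<Longrightarrow> nd (\<Gamma> + \<Delta>) \<psi>"
| TensorI: "nd \<Gamma> \<phi> \<Longrightarrow> nd \<Delta> \<psi> \<Longrightarrow> nd (\<Gamma> + \<Delta>) (Tensor \<phi> \<psi>)"
| TensorE: "nd \<Gamma> (Tensor \<phi> \<psi>) \<Longrightarrow> nd (\<Delta> + {#\<phi>, \<psi>#}) \<chi> \<Longrightarrow> nd (\<Gamma> + \<Delta>) \<chi>"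
| OneI: "nd {#} One"
| OneE: "nd \<Gamma> One \<Longrightarrow> nd \<Delta> \<phi> \<Longrightarrow> nd (\<Gamma> + \<Delta>) \<phi>"
| WithI: "nd \<Gamma> \<phi> \<Longrightarrow> nd \<Gamma> \<psi> \<Longrightarrow> nd \<Gamma> (With \<phi> \<psi>)"
| WithE1: "nd \<Gamma> (With \<phi> \<psi>) \<Longrightarrow> nd \<Gamma> \<phi>"
| WithE2: "nd \<Gamma> (With \<phi> \<psi>) \<Longrightarrow> nd \<Gamma> \<psi>"
| PlusI1: "nd \<Gamma> \<phi> \<Longrightarrow> nd \<Gamma> (Plus \<phi> \<psi>)"
| PlusI2: "nd \<Gamma> \<psi> \<Longrightarrow> nd \<Gamma> (Plus \<phi> \<psi>)"
| PlusE: "nd \<Gamma> (Plus \<phi> \<psi>) \<Longrightarrow> nd (add_mset \<phi> \<Delta>) \<chi> \<Longrightarrow> nd (add_mset \<psi> \<Delta>) \<chi>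
          \<Longrightarrow> nd (\<Gamma> + \<Delta>) \<chi>"
  \<comment> \<open>(TopI): premises are the list ps of pairs (Gamma_i, phi_i), n = length ps\<close>
| TopI: "\<forall>x\<in>set ps. nd (fst x) (snd x) \<Longrightarrow> nd (sum_list (map fst ps)) Top"
| ZeroE: "\<forall>x\<in>set ps. nd (fst x) (snd x) \<Longrightarrow> nd \<Delta> Zero
          \<Longrightarrow> nd (sum_list (map fst ps) + \<Delta>) \<chi>"
  \<comment> \<open>(Prom_n): ps is the list of pairs (Gamma_i, psi_i)\<close>
| Prom: "\<forall>x\<in>set ps. nd (fst x) (Bang (snd x)) \<Longrightarrow> nd (mset (map (\<lambda>x. Bang (snd x)) ps)) \<phi>
          \<Longrightarrow> nd (sum_list (map fst ps)) (Bang \<phi>)"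
| Der: "nd \<Gamma> (Bang \<phi>) \<Longrightarrow> nd (add_mset \<phi> \<Delta>) \<psi> \<Longrightarrow> nd (\<Gamma> + \<Delta>) \<psi>"
| Wk: "nd \<Gamma> (Bang \<phi>) \<Longrightarrow> nd \<Delta> \<psi> \<Longrightarrow> nd (\<Gamma> + \<Delta>) \<psi>"
| Ctr: "nd \<Gamma> (Bang \<phi>) \<Longrightarrow> nd (\<Delta> + {#Bang \<phi>, Bang \<phi>#}) \<psi> \<Longrightarrow> nd (\<Gamma> + \<Delta>) \<psi>"

type_synonym 'a aseq = "'a multiset \<times> 'a"           \<comment> \<open>P => p\<close>
type_synonym 'a abox = "'a aseq multiset"
type_synonym 'a arule = "'a abox multiset \<times> 'a abox \<times> 'a"
type_synonym 'a base = "'a arule set"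

definition persistent :: "'a base \<Rightarrow> 'a \<Rightarrow> bool" where
  "persistent \<B> p \<longleftrightarrow> (\<exists>S. ({#}, S, p) \<in> \<B> \<and> S \<noteq> {#})"

text \<open>(App): TC lists the pairs (T_i, C_i) for i = 1..m (so the boxes T_i enumerate A),
  DC lists the pairs (d_j, C_j) for j = m+1..n.\<close>
inductive aderiv :: "'a base \<Rightarrow> 'a multiset \<Rightarrow> 'a \<Rightarrow> bool" for \<B> where
  Ref: "aderiv \<B> {#p#} p"
| App: "(A, S, p) \<in> \<B> \<Longrightarrow> mset (map fst TC) = A
        \<Longrightarrow> (\<forall>d\<in>set DC. persistent \<B> (fst d))
        \<Longrightarrow> (\<forall>x\<in>set TC. \<forall>y\<in># fst x. aderiv \<B> (snd x + fst y) (snd y))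
        \<Longrightarrow> (\<forall>d\<in>set DC. aderiv \<B> (snd d) (fst d))
        \<Longrightarrow> (\<forall>y\<in># S. aderiv \<B> (mset (map fst DC) + fst y) (snd y))
        \<Longrightarrow> aderiv \<B> (sum_list (map snd TC) + sum_list (map snd DC)) p"

text \<open>supp B L phi  means  |-^L_B phi.  For a single antecedent formula theta, the
  condition "theta contributes K at base C" is: if theta = !delta then K is empty and
  |-^{}_C delta, otherwise |-^K_C theta (this is the clause for !Delta, Theta unfolded).\<close>

fun supp :: "'a base \<Rightarrow> 'a multiset \<Rightarrow> 'a form \<Rightarrow> bool" where
  "supp \<B> L (Atom p) = aderiv \<B> L p"
| "supp \<B> L (Lolli \<phi> \<psi>) =
     (\<forall>\<C> K. \<B> \<subseteq> \<C> \<longrightarrow>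
        (case \<phi> of Bang \<delta> \<Rightarrow> K = {#} \<and> supp \<C> {#} \<delta> | _ \<Rightarrow> supp \<C> K \<phi>)
        \<longrightarrow> supp \<C> (L + K) \<psi>)"
| "supp \<B> L (Tensor \<phi> \<psi>) =
     (\<forall>\<C> K p. \<B> \<subseteq> \<C> \<longrightarrow>
        (\<forall>\<D> K1 K2. \<C> \<subseteq> \<D> \<longrightarrow>
           (case \<phi> of Bang \<delta> \<Rightarrow> K1 = {#} \<and> supp \<D> {#} \<delta> | _ \<Rightarrow> supp \<D> K1 \<phi>) \<longrightarrow>
           (case \<psi> of Bang \<delta> \<Rightarrow> K2 = {#} \<and> supp \<D> {#} \<delta> | _ \<Rightarrow> supp \<D> K2 \<psi>) \<longrightarrow>
           aderiv \<D> (K + K1 + K2) p)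
        \<longrightarrow> aderiv \<C> (L + K) p)"
| "supp \<B> L One = (\<forall>\<C> K p. \<B> \<subseteq> \<C> \<longrightarrow> aderiv \<C> K p \<longrightarrow> aderiv \<C> (L + K) p)"
| "supp \<B> L (With \<phi> \<psi>) = (supp \<B> L \<phi> \<and> supp \<B> L \<psi>)"
| "supp \<B> L (Plus \<phi> \<psi>) =
     (\<forall>\<C> K p. \<B> \<subseteq> \<C> \<longrightarrow>
        (\<forall>\<D> K1. \<C> \<subseteq> \<D> \<longrightarrow>
           (case \<phi> of Bang \<delta> \<Rightarrow> K1 = {#} \<and> supp \<D> {#} \<delta> | _ \<Rightarrow> supp \<D> K1 \<phi>) \<longrightarrow>
           aderiv \<D> (K + K1) p) \<longrightarrow>
        (\<forall>\<D> K1. \<C> \<subseteq> \<D> \<longrightarrow>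
           (case \<psi> of Bang \<delta> \<Rightarrow> K1 = {#} \<and> supp \<D> {#} \<delta> | _ \<Rightarrow> supp \<D> K1 \<psi>) \<longrightarrow>
           aderiv \<D> (K + K1) p)
        \<longrightarrow> aderiv \<C> (L + K) p)"
| "supp \<B> L Zero = (\<forall>p K. aderiv \<B> (L + K) p)"
| "supp \<B> L Top = True"
| "supp \<B> L (Bang \<phi>) =
     (\<forall>\<C> K p. \<B> \<subseteq> \<C> \<longrightarrow>
        (\<forall>\<D>. \<C> \<subseteq> \<D> \<longrightarrow> supp \<D> {#} \<phi> \<longrightarrow> aderiv \<D> K p)
        \<longrightarrow> aderiv \<C> (L + K) p)"

definition piece :: "'a base \<Rightarrow> 'a form \<Rightarrow> 'a multiset \<Rightarrow> bool" where
  "piece \<C> \<theta> K = (case \<theta> of Bang \<delta> \<Rightarrow> K = {#} \<and> supp \<C> {#} \<delta> | _ \<Rightarrow> supp \<C> K \<theta>)"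

text \<open>Gamma |-^L_B phi for a multiset antecedent: empty antecedent means |-^L_B phi;
  otherwise quantify over extensions C and over an enumeration ks of Gamma paired with
  the multisets each formula contributes (bang formulas contribute nothing).\<close>
definition ante_supp :: "'a base \<Rightarrow> 'a form multiset \<Rightarrow> 'a multiset \<Rightarrow> 'a form \<Rightarrow> bool" where
  "ante_supp \<B> \<Gamma> L \<phi> =
     (if \<Gamma> = {#} then supp \<B> L \<phi>
      else (\<forall>\<C> ks. \<B> \<subseteq> \<C> \<longrightarrow> mset (map fst ks) = \<Gamma> \<longrightarrow>
              (\<forall>x\<in>set ks. piece \<C> (fst x) (snd x)) \<longrightarrow>
              supp \<C> (L + sum_list (map snd ks)) \<phi>))"

definition valid :: "'a form multiset \<Rightarrow> 'a form \<Rightarrow> bool" where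
  "valid \<Gamma> \<phi> = (\<forall>\<B>. ante_supp \<B> \<Gamma> {#} \<phi>)"

end

theory Submission
  imports Defs
begin

text \<open>The proof follows Sandqvist's simulation-base method. Fix a finite, subformula-closed
  set \<open>X\<close> containing \<open>\<Gamma>\<close> and \<open>\<phi>\<close>, and name every formula of \<open>X\<close> by an atom: atoms by
  themselves, all other formulas by fresh atoms. The simulation base contains, for every rule
  of \<open>N_ILL\<close>, its atomic shadow on these names; promotion becomes the only rule with a nonempty
  \<open>S\<close>, so the persistent atoms are exactly the names of \<open>!\<close>-formulas. By induction on
  \<open>\<chi> \<in> X\<close>, in every extension of the simulation base an atomic multiset derives the name of
  \<open>\<chi>\<close> iff it supports \<open>\<chi>\<close>. Validity, used at the simulation base extended by axioms for the
  \<open>\<delta>\<close> with \<open>!\<delta> \<in> \<Gamma>\<close> and with every other \<open>\<theta> \<in> \<Gamma>\<close> supported by its own name, thus yields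
  an atomic derivation of the name of \<open>\<phi>\<close> from the names of the other members of \<open>\<Gamma>\<close>.
  Conversely, such an atomic derivation reads back rule by rule as a natural deduction in
  which the \<open>!\<delta>\<close> are available in every context; this is harmless because \<open>!\<close>-formulas
  can be weakened and contracted.\<close>

section \<open>Support and atomic derivability\<close>

lemmas supp_piece_simps = supp.simps[folded piece_def]
declare supp.simps [simp del] supp_piece_simps [simp]

fun is_bang :: "'a form \<Rightarrow> bool" where
  "is_bang (Bang _) = True"
| "is_bang _ = False"

fun unbang :: "'a form \<Rightarrow> 'a form" where
  "unbang (Bang \<phi>) = \<phi>"
| "unbang \<phi> = \<phi>"

lemma Bang_unbang: "is_bang \<theta> \<Longrightarrow> Bang (unbang \<theta>) = \<theta>"
  by (cases \<theta>) auto

lemma piece_nonbang: "\<not> is_bang \<theta> \<Longrightarrow> piece \<C> \<theta> K \<longleftrightarrow> supp \<C> K \<theta>"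
  by (cases \<theta>) (auto simp: piece_def)

lemma piece_Bang [simp]: "piece \<C> (Bang \<delta>) K \<longleftrightarrow> K = {#} \<and> supp \<C> {#} \<delta>"
  by (simp add: piece_def)

lemma persistent_mono: "persistent \<B> p \<Longrightarrow> \<B> \<subseteq> \<C> \<Longrightarrow> persistent \<C> p"
  unfolding persistent_def by blast

lemma aderiv_mono: "aderiv \<B> K p \<Longrightarrow> \<B> \<subseteq> \<C> \<Longrightarrow> aderiv \<C> K p"
proof (induction rule: aderiv.induct)
  case (Ref p)
  show ?case by (rule aderiv.Ref)
next
  case (App A S p TC DC)
  show ?case
    by (rule aderiv.App[where TC = TC and DC = DC]) (use App in \<open>auto intro: persistent_mono\<close>)
qed

lemma supp_mono: "supp \<B> L \<phi> \<Longrightarrow> \<B> \<subseteq> \<C> \<Longrightarrow> supp \<C> L \<phi>"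
proof (induction \<phi> arbitrary: \<B> L)
  case (Atom x)
  then show ?case by (auto intro: aderiv_mono)
next
  case Zero
  then show ?case by (auto intro: aderiv_mono)
next
  case (With \<phi>1 \<phi>2)
  then show ?case by auto
qed (simp_all only: supp_piece_simps; meson order_trans)+

lemma piece_mono: "piece \<B> \<theta> K \<Longrightarrow> \<B> \<subseteq> \<C> \<Longrightarrow> piece \<C> \<theta> K"
  by (cases \<theta>) (auto simp: piece_def intro: supp_mono aderiv_mono)

lemma supp_Bang_of_supp: "supp \<B> {#} \<delta> \<Longrightarrow> supp \<B> {#} (Bang \<delta>)"
  by (auto intro: supp_mono)

lemma ante_suppD:
  assumes "ante_supp \<B> \<Gamma> L \<phi>" and "\<B> \<subseteq> \<C>" and "mset (map fst ks) = \<Gamma>"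
    and "\<forall>(\<theta>, K) \<in> set ks. piece \<C> \<theta> K"
  shows "supp \<C> (L + sum_list (map snd ks)) \<phi>"
proof (cases "\<Gamma> = {#}")
  case True
  with assms show ?thesis by (auto simp: ante_supp_def intro: supp_mono)
next
  case False
  with assms show ?thesis by (auto simp: ante_supp_def case_prod_beta)
qed

lemma aderiv_rule:
  assumes "(A, {#}, p) \<in> \<B>" and "mset (map fst TC) = A"
    and "\<forall>(T, C) \<in> set TC. \<forall>(Q, q) \<in># T. aderiv \<B> (C + Q) q"
  shows "aderiv \<B> (sum_list (map snd TC)) p"
  using aderiv.App[OF assms(1,2), of "[]"] assms(3) by fastforce

lemma aderiv_rule0: "({#}, {#}, p) \<in> \<B> \<Longrightarrow> aderiv \<B> {#} p"
  using aderiv_rule[of "{#}" p \<B> "[]"] by simp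

lemma aderiv_rule1:
  "({#T#}, {#}, p) \<in> \<B> \<Longrightarrow> \<forall>(Q, q) \<in># T. aderiv \<B> (C + Q) q \<Longrightarrow> aderiv \<B> C p"
  using aderiv_rule[of "{#T#}" p \<B> "[(T, C)]"] by simp

lemma aderiv_rule2:
  "({#T1, T2#}, {#}, p) \<in> \<B> \<Longrightarrow> \<forall>(Q, q) \<in># T1. aderiv \<B> (C1 + Q) q
    \<Longrightarrow> \<forall>(Q, q) \<in># T2. aderiv \<B> (C2 + Q) q \<Longrightarrow> aderiv \<B> (C1 + C2) p"
  using aderiv_rule[of "{#T1, T2#}" p \<B> "[(T1, C1), (T2, C2)]"] by simp

abbreviation atom_box :: "'a \<Rightarrow> 'a abox" where
  "atom_box a \<equiv> {#({#}, a)#}"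

lemma aderiv_rule_atom_boxes:
  assumes "(A + image_mset atom_box Q, {#}, p) \<in> \<B>" and "mset (map fst TC) = A"
    and "\<forall>(T, C) \<in> set TC. \<forall>(Q', q) \<in># T. aderiv \<B> (C + Q') q"
  shows "aderiv \<B> (sum_list (map snd TC) + Q) p"
proof -
  obtain qs where qs: "mset qs = Q" using ex_mset by blast
  have "aderiv \<B> (sum_list (map snd (TC @ map (\<lambda>q. (atom_box q, {#q#})) qs))) p"
    by (rule aderiv_rule[OF assms(1)]) (use assms(2,3) qs in \<open>auto simp: aderiv.Ref comp_def\<close>)
  then show ?thesis using qs by (simp add: comp_def)
qed

lemma aderiv_persistent_rule:
  "({#}, {#({#}, a)#}, p) \<in> \<B> \<Longrightarrow> aderiv \<B> {#} a \<Longrightarrow> aderiv \<B> {#} p"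
  using aderiv.App[of "{#}" "{#({#}, a)#}" p \<B> "[]" "[]"] by simp

lemma replicate_mset_add: "replicate_mset (m + n) x = replicate_mset m x + replicate_mset n x"
  by (induction m) auto

lemma sum_list_map_add_mset:
  "sum_list (map (\<lambda>x. add_mset b (f x)) xs) = sum_list (map f xs) + replicate_mset (length xs) b"
  by (induction xs) auto

lemma aderiv_App_sharing_persistent:
  assumes rule: "(A, S, p) \<in> \<B>" and A: "mset (map fst TC) = A"
    and b: "persistent \<B> b" and DC: "\<forall>(d, C) \<in> set DC. persistent \<B> d"
    and TC_prems: "\<forall>(T, C) \<in> set TC. \<forall>(Q, q) \<in># T. aderiv \<B> (C + {#b#} + Q) q"
    and DC_prems: "\<forall>(d, C) \<in> set DC. aderiv \<B> (C + {#b#}) d"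
    and S_prems: "\<forall>(U, v) \<in># S. aderiv \<B> (mset (map fst DC) + {#b#} + U) v"
  shows "aderiv \<B> (sum_list (map snd TC) + sum_list (map snd DC)
    + replicate_mset (Suc (length TC + length DC)) b) p"
proof -
  define TC' where "TC' = map (\<lambda>(T, C). (T, C + {#b#})) TC"
  define DC' where "DC' = map (\<lambda>(d, C). (d, C + {#b#})) DC @ [(b, {#b#})]"
  have "aderiv \<B> (sum_list (map snd TC') + sum_list (map snd DC')) p"
  proof (rule aderiv.App[OF rule])
    show "mset (map fst TC') = A" using A by (simp add: TC'_def comp_def case_prod_beta)
    show "\<forall>d\<in>set DC'. persistent \<B> (fst d)" using DC b by (auto simp: DC'_def)
    show "\<forall>x\<in>set TC'. \<forall>y\<in>#fst x. aderiv \<B> (snd x + fst y) (snd y)"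
      using TC_prems by (fastforce simp: TC'_def)
    show "\<forall>d\<in>set DC'. aderiv \<B> (snd d) (fst d)"
      using DC_prems by (auto simp: DC'_def aderiv.Ref)
    show "\<forall>y\<in>#S. aderiv \<B> (mset (map fst DC') + fst y) (snd y)"
      using S_prems by (auto simp: DC'_def comp_def case_prod_beta add.commute)
  qed
  then show ?thesis
    by (simp add: TC'_def DC'_def comp_def case_prod_beta sum_list_map_add_mset
        replicate_mset_add ac_simps)
qed

section \<open>Derived rules of natural deduction\<close>

lemma nd_Top: "nd \<Gamma> Top"
proof -
  obtain \<gamma>s where \<gamma>s: "mset \<gamma>s = \<Gamma>" using ex_mset by blast
  have "nd (sum_list (map fst (map (\<lambda>\<gamma>. ({#\<gamma>#}, \<gamma>)) \<gamma>s))) Top"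
    by (rule nd.TopI) (auto intro: nd.Ax)
  then show ?thesis using \<gamma>s by (simp add: comp_def)
qed

lemma nd_Zero: "nd \<Delta> Zero \<Longrightarrow> nd (\<Gamma> + \<Delta>) \<chi>"
proof -
  assume zero: "nd \<Delta> Zero"
  obtain \<gamma>s where \<gamma>s: "mset \<gamma>s = \<Gamma>" using ex_mset by blast
  have "nd (sum_list (map fst (map (\<lambda>\<gamma>. ({#\<gamma>#}, \<gamma>)) \<gamma>s)) + \<Delta>) \<chi>"
    by (rule nd.ZeroE[OF _ zero]) (auto intro: nd.Ax)
  then show ?thesis using \<gamma>s by (simp add: comp_def)
qed

lemma nd_weaken_Bangs: "nd \<Gamma> \<chi> \<Longrightarrow> nd (\<Gamma> + image_mset Bang \<Delta>) \<chi>"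
proof (induction \<Delta>)
  case (add \<delta> \<Delta>)
  then have "nd ({#Bang \<delta>#} + (\<Gamma> + image_mset Bang \<Delta>)) \<chi>"
    by (intro nd.Wk[OF nd.Ax])
  then show ?case by simp
qed simp

lemma nd_contract_Bang: "nd (\<Gamma> + {#Bang \<delta>, Bang \<delta>#}) \<chi> \<Longrightarrow> nd (add_mset (Bang \<delta>) \<Gamma>) \<chi>"
  using nd.Ctr[OF nd.Ax] by fastforce

lemma nd_contract_Bangs:
  "nd (\<Gamma> + image_mset Bang \<Delta> + image_mset Bang \<Delta>) \<chi> \<Longrightarrow> nd (\<Gamma> + image_mset Bang \<Delta>) \<chi>"
proof (induction \<Delta> arbitrary: \<Gamma>)
  case (add \<delta> \<Delta>)
  then have "nd ((\<Gamma> + {#Bang \<delta>, Bang \<delta>#}) + image_mset Bang \<Delta> + image_mset Bang \<Delta>) \<chi>"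
    by (simp add: ac_simps)
  then have "nd ((\<Gamma> + {#Bang \<delta>, Bang \<delta>#}) + image_mset Bang \<Delta>) \<chi>"
    by (rule add.IH)
  then have "nd ((\<Gamma> + image_mset Bang \<Delta>) + {#Bang \<delta>, Bang \<delta>#}) \<chi>"
    by (simp add: ac_simps)
  then show ?case by (simp add: nd_contract_Bang)
qed simp

lemma nd_merge_Bangs:
  "nd ((\<Gamma>1 + image_mset Bang \<Delta>) + (\<Gamma>2 + image_mset Bang \<Delta>)) \<chi>
    \<Longrightarrow> nd (\<Gamma>1 + \<Gamma>2 + image_mset Bang \<Delta>) \<chi>"
  by (rule nd_contract_Bangs) (simp add: ac_simps)

lemma nd_contract_repeat_Bangs:
  "nd (\<Gamma> + repeat_mset n (image_mset Bang \<Delta>) + image_mset Bang \<Delta>) \<chi>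
    \<Longrightarrow> nd (\<Gamma> + image_mset Bang \<Delta>) \<chi>"
proof (induction n arbitrary: \<Gamma>)
  case (Suc n)
  then have "nd ((\<Gamma> + repeat_mset n (image_mset Bang \<Delta>)) + image_mset Bang \<Delta> + image_mset Bang \<Delta>) \<chi>"
    by (simp add: add.assoc add.left_commute)
  then have "nd ((\<Gamma> + repeat_mset n (image_mset Bang \<Delta>)) + image_mset Bang \<Delta>) \<chi>"
    by (rule nd_contract_Bangs)
  then show ?case by (rule Suc.IH)
qed simp

lemma image_mset_sum_list: "image_mset f (sum_list Ms) = sum_list (map (image_mset f) Ms)"
  by (induction Ms) auto

lemma sum_list_map_add_const:
  "sum_list (map (\<lambda>x. f x + M) xs) = sum_list (map f xs) + repeat_mset (length xs) M"
  by (induction xs) (auto simp: ac_simps)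

lemma nd_Prom_Bangs:
  assumes prems: "\<forall>(\<Gamma>', \<beta>) \<in> set ps. is_bang \<beta> \<and> nd (\<Gamma>' + image_mset Bang \<Delta>) \<beta>"
    and main: "nd (mset (map snd ps) + image_mset Bang \<Delta>) \<phi>"
  shows "nd (sum_list (map fst ps) + image_mset Bang \<Delta>) (Bang \<phi>)"
proof -
  obtain \<delta>s where \<delta>s: "mset \<delta>s = \<Delta>" using ex_mset by blast
  define ps' where "ps' = map (\<lambda>(\<Gamma>', \<beta>). (\<Gamma>' + image_mset Bang \<Delta>, unbang \<beta>)) ps
    @ map (\<lambda>\<delta>. ({#Bang \<delta>#}, \<delta>)) \<delta>s"
  have Bangs: "map (\<lambda>x. Bang (unbang (snd x))) ps = map snd ps"
    using prems by (induction ps) (auto simp: Bang_unbang)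
  have "nd (sum_list (map fst ps')) (Bang \<phi>)"
  proof (rule nd.Prom)
    show "\<forall>x\<in>set ps'. nd (fst x) (Bang (snd x))"
      using prems by (auto simp: ps'_def Bang_unbang intro: nd.Ax)
    have "mset (map (\<lambda>x. Bang (snd x)) ps') = mset (map snd ps) + image_mset Bang \<Delta>"
      using \<delta>s by (simp add: ps'_def comp_def case_prod_beta Bangs)
    with main show "nd (mset (map (\<lambda>x. Bang (snd x)) ps')) \<phi>" by simp
  qed
  moreover have "sum_list (map fst ps')
      = sum_list (map fst ps) + repeat_mset (length ps) (image_mset Bang \<Delta>) + image_mset Bang \<Delta>"
    using \<delta>s by (simp add: ps'_def comp_def case_prod_beta sum_list_map_add_const)
  ultimately show ?thesis by (simp add: nd_contract_repeat_Bangs)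
qed

lemma nd_Der_Bangs: "\<delta> \<in># \<Delta> \<Longrightarrow> nd (image_mset Bang \<Delta>) \<delta>"
proof -
  assume "\<delta> \<in># \<Delta>"
  then obtain \<Delta>' where \<Delta>: "\<Delta> = add_mset \<delta> \<Delta>'" by (metis mset_add)
  from nd.Der[OF nd.Ax nd.Ax] have "nd {#Bang \<delta>#} \<delta>" by simp
  then have "nd ({#Bang \<delta>#} + image_mset Bang \<Delta>') \<delta>" by (rule nd_weaken_Bangs)
  then show ?thesis by (simp add: \<Delta>)
qed

lemma nd_weaken_derived_Bangs:
  assumes "\<forall>(\<Gamma>', \<beta>) \<in> set ps. is_bang \<beta> \<and> nd (\<Gamma>' + image_mset Bang \<Delta>) \<beta>"
    and "nd (\<Gamma> + image_mset Bang \<Delta>) \<chi>"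
  shows "nd (\<Gamma> + sum_list (map fst ps) + image_mset Bang \<Delta>) \<chi>"
  using assms
proof (induction ps arbitrary: \<Gamma>)
  case (Cons x ps)
  obtain \<Gamma>' \<psi> where x: "x = (\<Gamma>', Bang \<psi>)" and \<Gamma>': "nd (\<Gamma>' + image_mset Bang \<Delta>) (Bang \<psi>)"
    using Cons.prems(1) by (cases x, rename_tac \<beta>, case_tac \<beta>) auto
  have "nd ((\<Gamma>' + image_mset Bang \<Delta>) + (\<Gamma> + image_mset Bang \<Delta>)) \<chi>"
    by (rule nd.Wk[OF \<Gamma>' Cons.prems(2)])
  then have "nd ((\<Gamma> + \<Gamma>') + image_mset Bang \<Delta>) \<chi>"
    using nd_merge_Bangs by (simp add: ac_simps)
  then have "nd ((\<Gamma> + \<Gamma>') + sum_list (map fst ps) + image_mset Bang \<Delta>) \<chi>"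
    using Cons.IH Cons.prems(1) by simp
  then show ?case by (simp add: x ac_simps)
qed simp

section \<open>The simulation base\<close>

fun subformulas :: "'a form \<Rightarrow> 'a form set" where
  "subformulas (Lolli \<phi> \<psi>) = insert (Lolli \<phi> \<psi>) (subformulas \<phi> \<union> subformulas \<psi>)"
| "subformulas (Tensor \<phi> \<psi>) = insert (Tensor \<phi> \<psi>) (subformulas \<phi> \<union> subformulas \<psi>)"
| "subformulas (With \<phi> \<psi>) = insert (With \<phi> \<psi>) (subformulas \<phi> \<union> subformulas \<psi>)"
| "subformulas (Plus \<phi> \<psi>) = insert (Plus \<phi> \<psi>) (subformulas \<phi> \<union> subformulas \<psi>)"
| "subformulas (Bang \<phi>) = insert (Bang \<phi>) (subformulas \<phi>)"
| "subformulas \<chi> = {\<chi>}"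

lemma subformulas_refl: "\<chi> \<in> subformulas \<chi>"
  by (cases \<chi>) auto

lemma finite_subformulas: "finite (subformulas \<chi>)"
  by (induction \<chi>) auto

lemma subformulas_trans: "\<psi> \<in> subformulas \<chi> \<Longrightarrow> subformulas \<psi> \<subseteq> subformulas \<chi>"
  by (induction \<chi>) auto

locale flattening =
  fixes flat :: "'a form \<Rightarrow> 'a" and unflat :: "'a \<Rightarrow> 'a form" and X :: "'a form set"
  assumes subformulas_closed: "\<chi> \<in> X \<Longrightarrow> subformulas \<chi> \<subseteq> X"
    and flat_Atom: "flat (Atom q) = q"
    and unflat_flat [simp]: "\<chi> \<in> X \<Longrightarrow> unflat (flat \<chi>) = \<chi>"
begin

lemma immediate_subformulas_in:
  "Lolli \<phi> \<psi> \<in> X \<Longrightarrow> \<phi> \<in> X" "Lolli \<phi> \<psi> \<in> X \<Longrightarrow> \<psi> \<in> X"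
  "Tensor \<phi> \<psi> \<in> X \<Longrightarrow> \<phi> \<in> X" "Tensor \<phi> \<psi> \<in> X \<Longrightarrow> \<psi> \<in> X"
  "With \<phi> \<psi> \<in> X \<Longrightarrow> \<phi> \<in> X" "With \<phi> \<psi> \<in> X \<Longrightarrow> \<psi> \<in> X"
  "Plus \<phi> \<psi> \<in> X \<Longrightarrow> \<phi> \<in> X" "Plus \<phi> \<psi> \<in> X \<Longrightarrow> \<psi> \<in> X"
  "Bang \<phi> \<in> X \<Longrightarrow> \<phi> \<in> X"
  using subformulas_closed subformulas_refl by fastforce+

inductive_set sim_base :: "'a arule set" where
  LolliI: "Lolli \<phi> \<psi> \<in> X \<Longrightarrow> ({#{#({#flat \<phi>#}, flat \<psi>)#}#}, {#}, flat (Lolli \<phi> \<psi>)) \<in> sim_base"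
| LolliE: "Lolli \<phi> \<psi> \<in> X \<Longrightarrow> ({#atom_box (flat (Lolli \<phi> \<psi>)), atom_box (flat \<phi>)#}, {#}, flat \<psi>) \<in> sim_base"
| TensorI: "Tensor \<phi> \<psi> \<in> X \<Longrightarrow> ({#atom_box (flat \<phi>), atom_box (flat \<psi>)#}, {#}, flat (Tensor \<phi> \<psi>)) \<in> sim_base"
| TensorE: "Tensor \<phi> \<psi> \<in> X
    \<Longrightarrow> ({#atom_box (flat (Tensor \<phi> \<psi>)), {#({#flat \<phi>, flat \<psi>#}, p)#}#}, {#}, p) \<in> sim_base"
| OneI: "One \<in> X \<Longrightarrow> ({#}, {#}, flat One) \<in> sim_base"
| OneE: "One \<in> X \<Longrightarrow> ({#atom_box (flat One), atom_box p#}, {#}, p) \<in> sim_base"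
| WithI: "With \<phi> \<psi> \<in> X \<Longrightarrow> ({#{#({#}, flat \<phi>), ({#}, flat \<psi>)#}#}, {#}, flat (With \<phi> \<psi>)) \<in> sim_base"
| WithE1: "With \<phi> \<psi> \<in> X \<Longrightarrow> ({#atom_box (flat (With \<phi> \<psi>))#}, {#}, flat \<phi>) \<in> sim_base"
| WithE2: "With \<phi> \<psi> \<in> X \<Longrightarrow> ({#atom_box (flat (With \<phi> \<psi>))#}, {#}, flat \<psi>) \<in> sim_base"
| PlusI1: "Plus \<phi> \<psi> \<in> X \<Longrightarrow> ({#atom_box (flat \<phi>)#}, {#}, flat (Plus \<phi> \<psi>)) \<in> sim_base"
| PlusI2: "Plus \<phi> \<psi> \<in> X \<Longrightarrow> ({#atom_box (flat \<psi>)#}, {#}, flat (Plus \<phi> \<psi>)) \<in> sim_base"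
| PlusE: "Plus \<phi> \<psi> \<in> X
    \<Longrightarrow> ({#atom_box (flat (Plus \<phi> \<psi>)), {#({#flat \<phi>#}, p), ({#flat \<psi>#}, p)#}#}, {#}, p) \<in> sim_base"
| TopI: "Top \<in> X \<Longrightarrow> (image_mset atom_box Q, {#}, flat Top) \<in> sim_base"
| ZeroE: "Zero \<in> X \<Longrightarrow> ({#atom_box (flat Zero)#} + image_mset atom_box Q, {#}, p) \<in> sim_base"
| Prom: "Bang \<phi> \<in> X \<Longrightarrow> ({#}, {#({#}, flat \<phi>)#}, flat (Bang \<phi>)) \<in> sim_base"
| Der: "Bang \<phi> \<in> X \<Longrightarrow> ({#atom_box (flat (Bang \<phi>)), {#({#flat \<phi>#}, p)#}#}, {#}, p) \<in> sim_base"
| Wk: "Bang \<phi> \<in> X \<Longrightarrow> ({#atom_box (flat (Bang \<phi>)), atom_box p#}, {#}, p) \<in> sim_base"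
| Ctr: "Bang \<phi> \<in> X
    \<Longrightarrow> ({#atom_box (flat (Bang \<phi>)), {#({#flat (Bang \<phi>), flat (Bang \<phi>)#}, p)#}#}, {#}, p) \<in> sim_base"

lemma aderiv_add_flat_Bang:
  assumes "sim_base \<subseteq> \<C>" "Bang \<phi> \<in> X" "aderiv \<C> K q"
  shows "aderiv \<C> (K + {#flat (Bang \<phi>)#}) q"
proof -
  have "aderiv \<C> ({#flat (Bang \<phi>)#} + K) q"
    by (rule aderiv_rule2[OF subsetD[OF assms(1) sim_base.Wk[OF assms(2)]]])
      (use assms(3) in \<open>simp_all add: aderiv.Ref\<close>)
  then show ?thesis by (simp add: add.commute)
qed

lemma aderiv_contract_flat_Bang:
  assumes "sim_base \<subseteq> \<C>" "Bang \<phi> \<in> X"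
  shows "aderiv \<C> (K + replicate_mset (Suc n) (flat (Bang \<phi>))) q
    \<Longrightarrow> aderiv \<C> (K + {#flat (Bang \<phi>)#}) q"
proof (induction n arbitrary: K)
  case (Suc n)
  then have "aderiv \<C> ({#flat (Bang \<phi>)#} + (K + replicate_mset n (flat (Bang \<phi>)))) q"
    using aderiv_rule2[OF subsetD[OF assms(1) sim_base.Ctr[OF assms(2)]]] aderiv.Ref
    by (fastforce simp: add_mset_commute)
  then show ?case using Suc.IH by (simp add: add.commute)
qed simp

lemma persistent_flat_Bang: "sim_base \<subseteq> \<C> \<Longrightarrow> Bang \<phi> \<in> X \<Longrightarrow> persistent \<C> (flat (Bang \<phi>))"
  unfolding persistent_def using sim_base.Prom by fastforce

lemma aderiv_discharge_axiom:
  assumes \<C>: "sim_base \<subseteq> \<C>" and \<phi>: "Bang \<phi> \<in> X"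
  shows "aderiv (insert ({#}, {#}, flat \<phi>) \<C>) K p \<Longrightarrow> aderiv \<C> (K + {#flat (Bang \<phi>)#}) p"
proof (induction rule: aderiv.induct)
  case (Ref q)
  show ?case by (rule aderiv_add_flat_Bang[OF \<C> \<phi> aderiv.Ref])
next
  case (App A S p TC DC)
  let ?b = "flat (Bang \<phi>)"
  have b: "persistent \<C> ?b" by (rule persistent_flat_Bang[OF \<C> \<phi>])
  have DC: "\<forall>(d, C) \<in> set DC. persistent \<C> d"
    using App(3) unfolding persistent_def by fastforce
  have DC_prems: "\<forall>(d, C) \<in> set DC. aderiv \<C> (C + {#?b#}) d"
    using App(5) by auto
  have "\<exists>n. aderiv \<C> (sum_list (map snd TC) + sum_list (map snd DC) + replicate_mset (Suc n) ?b) p"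
  proof (cases "(A, S, p) \<in> \<C>")
    case True
    have "\<forall>(T, C) \<in> set TC. \<forall>(Q, q) \<in># T. aderiv \<C> (C + {#?b#} + Q) q"
      using App(4) by (fastforce simp: ac_simps)
    moreover have "\<forall>(U, v) \<in># S. aderiv \<C> (mset (map fst DC) + {#?b#} + U) v"
      using App(6) by (fastforce simp: ac_simps)
    ultimately show ?thesis
      using aderiv_App_sharing_persistent[OF True App(2) b DC _ DC_prems] by blast
  next
    case False
    \<comment> \<open>the axiom for \<open>flat \<phi>\<close> is replaced by dereliction of \<open>flat (Bang \<phi>)\<close>\<close>
    with App(1,2) have axiom: "TC = []" "S = {#}" "p = flat \<phi>" by auto
    let ?TC = "[(atom_box ?b, {#} :: 'a multiset), ({#({#flat \<phi>#}, flat \<phi>)#}, {#})]"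
    have "aderiv \<C> (sum_list (map snd ?TC) + sum_list (map snd DC)
        + replicate_mset (Suc (length ?TC + length DC)) ?b) (flat \<phi>)"
    proof (rule aderiv_App_sharing_persistent[OF subsetD[OF \<C> sim_base.Der[OF \<phi>]] _ b DC _ DC_prems])
      show "\<forall>(T, C) \<in> set ?TC. \<forall>(Q, q) \<in># T. aderiv \<C> (C + {#?b#} + Q) q"
        using aderiv_add_flat_Bang[OF \<C> \<phi> aderiv.Ref] by (auto simp: aderiv.Ref)
    qed simp_all
    then show ?thesis using axiom by (intro exI[of _ "length ?TC + length DC"]) simp
  qed
  then show ?case using aderiv_contract_flat_Bang[OF \<C> \<phi>] by blast
qed

definition simulated :: "'a form \<Rightarrow> bool" where
  "simulated \<chi> \<longleftrightarrow> (\<forall>\<C> L. sim_base \<subseteq> \<C> \<longrightarrow> (aderiv \<C> L (flat \<chi>) \<longleftrightarrow> supp \<C> L \<chi>))"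

lemma simulatedD: "simulated \<chi> \<Longrightarrow> sim_base \<subseteq> \<C> \<Longrightarrow> aderiv \<C> L (flat \<chi>) \<longleftrightarrow> supp \<C> L \<chi>"
  unfolding simulated_def by blast

lemma aderiv_flat_of_piece:
  assumes sim: "simulated \<theta>" and \<C>: "sim_base \<subseteq> \<C>" and piece: "piece \<C> \<theta> K"
  shows "aderiv \<C> K (flat \<theta>)"
proof (cases "is_bang \<theta>")
  case True
  then obtain \<delta> where \<theta>: "\<theta> = Bang \<delta>" by (cases \<theta>) auto
  with piece have K: "K = {#}" and \<delta>: "supp \<C> {#} \<delta>" by auto
  from \<delta> have "supp \<C> {#} (Bang \<delta>)" by (rule supp_Bang_of_supp)
  then show ?thesis unfolding K using simulatedD[OF sim \<C>] by (simp only: \<theta>)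
next
  case False
  with simulatedD[OF sim \<C>] piece show ?thesis by (simp add: piece_nonbang)
qed

lemma aderiv_add_flat_of_pieces:
  assumes sim: "simulated \<theta>" and \<C>: "sim_base \<subseteq> \<C>"
    and pieces: "\<And>\<D> K'. \<C> \<subseteq> \<D> \<Longrightarrow> piece \<D> \<theta> K' \<Longrightarrow> aderiv \<D> (K + K') p"
  shows "aderiv \<C> (K + {#flat \<theta>#}) p"
proof -
  have "aderiv \<C> {#flat \<theta>#} (flat \<theta>)" by (rule aderiv.Ref)
  then have flat: "supp \<C> {#flat \<theta>#} \<theta>" by (simp add: simulatedD[OF sim \<C>])
  show ?thesis
  proof (cases "is_bang \<theta>")
    case True
    then obtain \<delta> where \<theta>: "\<theta> = Bang \<delta>" by (cases \<theta>) auto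
    have "\<forall>\<D>. \<C> \<subseteq> \<D> \<longrightarrow> supp \<D> {#} \<delta> \<longrightarrow> aderiv \<D> K p"
      using pieces[of _ "{#}"] by (simp add: \<theta>)
    moreover have "\<forall>\<C>' K' p'. \<C> \<subseteq> \<C>' \<longrightarrow> (\<forall>\<D>. \<C>' \<subseteq> \<D> \<longrightarrow> supp \<D> {#} \<delta> \<longrightarrow> aderiv \<D> K' p')
        \<longrightarrow> aderiv \<C>' ({#flat \<theta>#} + K') p'"
      using flat by (simp only: \<theta> supp.simps(9))
    ultimately have "aderiv \<C> ({#flat \<theta>#} + K) p" by (metis order_refl)
    then show ?thesis by (simp add: add.commute)
  next
    case False
    with flat have "piece \<C> \<theta> {#flat \<theta>#}" by (simp add: piece_nonbang)
    then show ?thesis by (rule pieces[OF order_refl])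
  qed
qed

lemma aderiv_add_flat_pair_of_pieces:
  assumes \<phi>: "simulated \<phi>" and \<psi>: "simulated \<psi>" and \<C>: "sim_base \<subseteq> \<C>"
    and pieces: "\<And>\<D> K1 K2. \<C> \<subseteq> \<D> \<Longrightarrow> piece \<D> \<phi> K1 \<Longrightarrow> piece \<D> \<psi> K2 \<Longrightarrow> aderiv \<D> (K + K1 + K2) p"
  shows "aderiv \<C> (K + {#flat \<phi>, flat \<psi>#}) p"
proof -
  have "aderiv \<C> (K + {#flat \<psi>#} + {#flat \<phi>#}) p"
  proof (rule aderiv_add_flat_of_pieces[OF \<phi> \<C>])
    fix \<D> K1 assume "\<C> \<subseteq> \<D>" and piece1: "piece \<D> \<phi> K1"
    from \<C> \<open>\<C> \<subseteq> \<D>\<close> have \<D>: "sim_base \<subseteq> \<D>" by (rule order_trans)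
    have "aderiv \<D> (K + K1 + {#flat \<psi>#}) p"
    proof (rule aderiv_add_flat_of_pieces[OF \<psi> \<D>])
      fix \<D>' K2 assume "\<D> \<subseteq> \<D>'" and "piece \<D>' \<psi> K2"
      moreover from \<open>\<C> \<subseteq> \<D>\<close> \<open>\<D> \<subseteq> \<D>'\<close> have "\<C> \<subseteq> \<D>'" by (rule order_trans)
      moreover from piece1 \<open>\<D> \<subseteq> \<D>'\<close> have "piece \<D>' \<phi> K1" by (rule piece_mono)
      ultimately show "aderiv \<D>' (K + K1 + K2) p" using pieces by blast
    qed
    then show "aderiv \<D> (K + {#flat \<psi>#} + K1) p" by (simp add: ac_simps)
  qed
  then show ?thesis by (simp add: add_mset_commute)
qed

lemma simulated_Atom: "simulated (Atom q)"
  by (simp add: simulated_def flat_Atom)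

lemma simulated_Lolli:
  assumes X: "Lolli \<phi> \<psi> \<in> X" and \<phi>: "simulated \<phi>" and \<psi>: "simulated \<psi>"
  shows "simulated (Lolli \<phi> \<psi>)"
proof (unfold simulated_def, intro allI impI iffI)
  fix \<C> L assume \<C>: "sim_base \<subseteq> \<C>" and flat: "aderiv \<C> L (flat (Lolli \<phi> \<psi>))"
  show "supp \<C> L (Lolli \<phi> \<psi>)" unfolding supp_piece_simps
  proof (intro allI impI)
    fix \<C>' K assume "\<C> \<subseteq> \<C>'" and piece: "piece \<C>' \<phi> K"
    from \<C> \<open>\<C> \<subseteq> \<C>'\<close> have \<C>': "sim_base \<subseteq> \<C>'" by (rule order_trans)
    have "aderiv \<C>' (L + K) (flat \<psi>)"
      by (rule aderiv_rule2[OF subsetD[OF \<C>' sim_base.LolliE[OF X]]])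
        (use aderiv_mono[OF flat \<open>\<C> \<subseteq> \<C>'\<close>] aderiv_flat_of_piece[OF \<phi> \<C>' piece] in simp_all)
    then show "supp \<C>' (L + K) \<psi>" using simulatedD[OF \<psi> \<C>'] by simp
  qed
next
  fix \<C> L assume \<C>: "sim_base \<subseteq> \<C>" and supp: "supp \<C> L (Lolli \<phi> \<psi>)"
  have "aderiv \<C> (L + {#flat \<phi>#}) (flat \<psi>)"
  proof (rule aderiv_add_flat_of_pieces[OF \<phi> \<C>])
    fix \<D> K assume "\<C> \<subseteq> \<D>" and "piece \<D> \<phi> K"
    with supp have "supp \<D> (L + K) \<psi>" by simp
    moreover from \<C> \<open>\<C> \<subseteq> \<D>\<close> have "sim_base \<subseteq> \<D>" by (rule order_trans)
    ultimately show "aderiv \<D> (L + K) (flat \<psi>)" using simulatedD[OF \<psi>] by blast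
  qed
  then show "aderiv \<C> L (flat (Lolli \<phi> \<psi>))"
    by (intro aderiv_rule1[OF subsetD[OF \<C> sim_base.LolliI[OF X]]]) simp
qed

lemma simulated_Tensor:
  assumes X: "Tensor \<phi> \<psi> \<in> X" and \<phi>: "simulated \<phi>" and \<psi>: "simulated \<psi>"
  shows "simulated (Tensor \<phi> \<psi>)"
proof (unfold simulated_def, intro allI impI iffI)
  fix \<C> L assume \<C>: "sim_base \<subseteq> \<C>" and flat: "aderiv \<C> L (flat (Tensor \<phi> \<psi>))"
  show "supp \<C> L (Tensor \<phi> \<psi>)" unfolding supp_piece_simps
  proof (intro allI impI)
    fix \<C>' K p assume "\<C> \<subseteq> \<C>'"
      and pieces: "\<forall>\<D> K1 K2. \<C>' \<subseteq> \<D> \<longrightarrow> piece \<D> \<phi> K1 \<longrightarrow> piece \<D> \<psi> K2 \<longrightarrow> aderiv \<D> (K + K1 + K2) p"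
    from \<C> \<open>\<C> \<subseteq> \<C>'\<close> have \<C>': "sim_base \<subseteq> \<C>'" by (rule order_trans)
    have "aderiv \<C>' (K + {#flat \<phi>, flat \<psi>#}) p"
      by (rule aderiv_add_flat_pair_of_pieces[OF \<phi> \<psi> \<C>']) (use pieces in blast)
    then show "aderiv \<C>' (L + K) p"
      by (intro aderiv_rule2[OF subsetD[OF \<C>' sim_base.TensorE[OF X]]])
        (use aderiv_mono[OF flat \<open>\<C> \<subseteq> \<C>'\<close>] in simp_all)
  qed
next
  fix \<C> L assume \<C>: "sim_base \<subseteq> \<C>" and supp: "supp \<C> L (Tensor \<phi> \<psi>)"
  have "\<forall>\<D> K1 K2. \<C> \<subseteq> \<D> \<longrightarrow> piece \<D> \<phi> K1 \<longrightarrow> piece \<D> \<psi> K2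
      \<longrightarrow> aderiv \<D> ({#} + K1 + K2) (flat (Tensor \<phi> \<psi>))"
  proof (intro allI impI)
    fix \<D> K1 K2 assume "\<C> \<subseteq> \<D>" and piece1: "piece \<D> \<phi> K1" and piece2: "piece \<D> \<psi> K2"
    from \<C> \<open>\<C> \<subseteq> \<D>\<close> have \<D>: "sim_base \<subseteq> \<D>" by (rule order_trans)
    have "aderiv \<D> (K1 + K2) (flat (Tensor \<phi> \<psi>))"
      by (rule aderiv_rule2[OF subsetD[OF \<D> sim_base.TensorI[OF X]]])
        (use aderiv_flat_of_piece[OF \<phi> \<D> piece1] aderiv_flat_of_piece[OF \<psi> \<D> piece2] in simp_all)
    then show "aderiv \<D> ({#} + K1 + K2) (flat (Tensor \<phi> \<psi>))" by simp
  qed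
  then have "aderiv \<C> (L + {#}) (flat (Tensor \<phi> \<psi>))"
    by (rule supp[unfolded supp_piece_simps, rule_format (no_asm), OF order_refl])
  then show "aderiv \<C> L (flat (Tensor \<phi> \<psi>))" by simp
qed

lemma simulated_One:
  assumes X: "One \<in> X"
  shows "simulated One"
proof (unfold simulated_def, intro allI impI iffI)
  fix \<C> L assume \<C>: "sim_base \<subseteq> \<C>" and flat: "aderiv \<C> L (flat One)"
  show "supp \<C> L One" unfolding supp_piece_simps
  proof (intro allI impI)
    fix \<C>' K p assume "\<C> \<subseteq> \<C>'" and K: "aderiv \<C>' K p"
    from \<C> \<open>\<C> \<subseteq> \<C>'\<close> have \<C>': "sim_base \<subseteq> \<C>'" by (rule order_trans)
    show "aderiv \<C>' (L + K) p"
      by (rule aderiv_rule2[OF subsetD[OF \<C>' sim_base.OneE[OF X]]])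
        (use aderiv_mono[OF flat \<open>\<C> \<subseteq> \<C>'\<close>] K in simp_all)
  qed
next
  fix \<C> L assume \<C>: "sim_base \<subseteq> \<C>" and supp: "supp \<C> L One"
  have "aderiv \<C> {#} (flat One)" by (rule aderiv_rule0[OF subsetD[OF \<C> sim_base.OneI[OF X]]])
  with supp show "aderiv \<C> L (flat One)" by force
qed

lemma simulated_Zero:
  assumes X: "Zero \<in> X"
  shows "simulated Zero"
proof (unfold simulated_def, intro allI impI iffI)
  fix \<C> L assume \<C>: "sim_base \<subseteq> \<C>" and flat: "aderiv \<C> L (flat Zero)"
  have "aderiv \<C> (L + K) p" for K p
    using aderiv_rule_atom_boxes[OF subsetD[OF \<C> sim_base.ZeroE[OF X]], of "[(atom_box (flat Zero), L)]"]
      flat by simp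
  then show "supp \<C> L Zero" by simp
next
  fix \<C> L assume "sim_base \<subseteq> \<C>" and "supp \<C> L Zero"
  then show "aderiv \<C> L (flat Zero)" using add_0_right by (metis supp_piece_simps(7))
qed

lemma simulated_Top:
  assumes X: "Top \<in> X"
  shows "simulated Top"
proof (unfold simulated_def, intro allI impI)
  fix \<C> L assume "sim_base \<subseteq> \<C>"
  with sim_base.TopI[OF X] have "({#} + image_mset atom_box L, {#}, flat Top) \<in> \<C>" by auto
  from aderiv_rule_atom_boxes[OF this, of "[]"] show "aderiv \<C> L (flat Top) \<longleftrightarrow> supp \<C> L Top"
    by simp
qed

lemma simulated_With:
  assumes X: "With \<phi> \<psi> \<in> X" and \<phi>: "simulated \<phi>" and \<psi>: "simulated \<psi>"
  shows "simulated (With \<phi> \<psi>)"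
proof (unfold simulated_def, intro allI impI)
  fix \<C> L assume \<C>: "sim_base \<subseteq> \<C>"
  have "aderiv \<C> L (flat (With \<phi> \<psi>)) \<longleftrightarrow> aderiv \<C> L (flat \<phi>) \<and> aderiv \<C> L (flat \<psi>)"
  proof
    assume "aderiv \<C> L (flat (With \<phi> \<psi>))"
    then show "aderiv \<C> L (flat \<phi>) \<and> aderiv \<C> L (flat \<psi>)"
      using aderiv_rule1[OF subsetD[OF \<C> sim_base.WithE1[OF X]]]
        aderiv_rule1[OF subsetD[OF \<C> sim_base.WithE2[OF X]]] by simp
  next
    assume "aderiv \<C> L (flat \<phi>) \<and> aderiv \<C> L (flat \<psi>)"
    then show "aderiv \<C> L (flat (With \<phi> \<psi>))"
      by (intro aderiv_rule1[OF subsetD[OF \<C> sim_base.WithI[OF X]]]) simp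
  qed
  then show "aderiv \<C> L (flat (With \<phi> \<psi>)) \<longleftrightarrow> supp \<C> L (With \<phi> \<psi>)"
    by (simp add: simulatedD[OF \<phi> \<C>] simulatedD[OF \<psi> \<C>])
qed

lemma simulated_Plus:
  assumes X: "Plus \<phi> \<psi> \<in> X" and \<phi>: "simulated \<phi>" and \<psi>: "simulated \<psi>"
  shows "simulated (Plus \<phi> \<psi>)"
proof (unfold simulated_def, intro allI impI iffI)
  fix \<C> L assume \<C>: "sim_base \<subseteq> \<C>" and flat: "aderiv \<C> L (flat (Plus \<phi> \<psi>))"
  show "supp \<C> L (Plus \<phi> \<psi>)" unfolding supp_piece_simps
  proof (intro allI impI)
    fix \<C>' K p assume "\<C> \<subseteq> \<C>'"
      and pieces1: "\<forall>\<D> K1. \<C>' \<subseteq> \<D> \<longrightarrow> piece \<D> \<phi> K1 \<longrightarrow> aderiv \<D> (K + K1) p"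
      and pieces2: "\<forall>\<D> K1. \<C>' \<subseteq> \<D> \<longrightarrow> piece \<D> \<psi> K1 \<longrightarrow> aderiv \<D> (K + K1) p"
    from \<C> \<open>\<C> \<subseteq> \<C>'\<close> have \<C>': "sim_base \<subseteq> \<C>'" by (rule order_trans)
    have "aderiv \<C>' (K + {#flat \<phi>#}) p"
      by (rule aderiv_add_flat_of_pieces[OF \<phi> \<C>']) (use pieces1 in blast)
    moreover have "aderiv \<C>' (K + {#flat \<psi>#}) p"
      by (rule aderiv_add_flat_of_pieces[OF \<psi> \<C>']) (use pieces2 in blast)
    ultimately show "aderiv \<C>' (L + K) p"
      by (intro aderiv_rule2[OF subsetD[OF \<C>' sim_base.PlusE[OF X]]])
        (use aderiv_mono[OF flat \<open>\<C> \<subseteq> \<C>'\<close>] in simp_all)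
  qed
next
  fix \<C> L assume \<C>: "sim_base \<subseteq> \<C>" and supp: "supp \<C> L (Plus \<phi> \<psi>)"
  have "aderiv \<D> ({#} + K) (flat (Plus \<phi> \<psi>))"
    if "\<C> \<subseteq> \<D>" and "piece \<D> \<theta> K" and "\<theta> = \<phi> \<or> \<theta> = \<psi>" for \<D> K \<theta>
  proof -
    from \<C> \<open>\<C> \<subseteq> \<D>\<close> have \<D>: "sim_base \<subseteq> \<D>" by (rule order_trans)
    from \<open>\<theta> = \<phi> \<or> \<theta> = \<psi>\<close> show ?thesis
    proof
      assume "\<theta> = \<phi>"
      with that(2) show ?thesis
        by (intro aderiv_rule1[OF subsetD[OF \<D> sim_base.PlusI1[OF X]]])
          (simp add: aderiv_flat_of_piece[OF \<phi> \<D>])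
    next
      assume "\<theta> = \<psi>"
      with that(2) show ?thesis
        by (intro aderiv_rule1[OF subsetD[OF \<D> sim_base.PlusI2[OF X]]])
          (simp add: aderiv_flat_of_piece[OF \<psi> \<D>])
    qed
  qed
  then have "aderiv \<C> (L + {#}) (flat (Plus \<phi> \<psi>))"
    by (intro supp[unfolded supp_piece_simps, rule_format (no_asm), OF order_refl]) blast+
  then show "aderiv \<C> L (flat (Plus \<phi> \<psi>))" by simp
qed

lemma simulated_Bang:
  assumes X: "Bang \<phi> \<in> X" and \<phi>: "simulated \<phi>"
  shows "simulated (Bang \<phi>)"
proof (unfold simulated_def, intro allI impI iffI)
  fix \<C> L assume \<C>: "sim_base \<subseteq> \<C>" and flat: "aderiv \<C> L (flat (Bang \<phi>))"
  show "supp \<C> L (Bang \<phi>)" unfolding supp_piece_simps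
  proof (intro allI impI)
    fix \<C>' K p assume "\<C> \<subseteq> \<C>'" and K: "\<forall>\<D>. \<C>' \<subseteq> \<D> \<longrightarrow> supp \<D> {#} \<phi> \<longrightarrow> aderiv \<D> K p"
    from \<C> \<open>\<C> \<subseteq> \<C>'\<close> have \<C>': "sim_base \<subseteq> \<C>'" by (rule order_trans)
    \<comment> \<open>\<open>K\<close> may use \<open>\<phi>\<close> as an axiom; that axiom is then paid for by one copy of \<open>flat (Bang \<phi>)\<close>\<close>
    define \<D> where "\<D> = insert ({#}, {#}, flat \<phi>) \<C>'"
    have "\<C>' \<subseteq> \<D>" by (auto simp: \<D>_def)
    with \<C>' have \<D>: "sim_base \<subseteq> \<D>" by (rule order_trans)
    have "aderiv \<D> {#} (flat \<phi>)" by (rule aderiv_rule0) (simp add: \<D>_def)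
    with simulatedD[OF \<phi> \<D>] K \<open>\<C>' \<subseteq> \<D>\<close> have "aderiv \<D> K p" by blast
    then have "aderiv \<C>' (K + {#flat (Bang \<phi>)#}) p"
      unfolding \<D>_def by (rule aderiv_discharge_axiom[OF \<C>' X])
    then have "aderiv \<C>' (K + {#flat (Bang \<phi>)#} + {#flat (Bang \<phi>)#}) p"
      by (rule aderiv_add_flat_Bang[OF \<C>' X])
    then show "aderiv \<C>' (L + K) p"
      by (intro aderiv_rule2[OF subsetD[OF \<C>' sim_base.Ctr[OF X]]])
        (use aderiv_mono[OF flat \<open>\<C> \<subseteq> \<C>'\<close>] in \<open>simp_all add: ac_simps\<close>)
  qed
next
  fix \<C> L assume \<C>: "sim_base \<subseteq> \<C>" and supp: "supp \<C> L (Bang \<phi>)"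
  have "\<forall>\<D>. \<C> \<subseteq> \<D> \<longrightarrow> supp \<D> {#} \<phi> \<longrightarrow> aderiv \<D> {#} (flat (Bang \<phi>))"
  proof (intro allI impI)
    fix \<D> assume "\<C> \<subseteq> \<D>" and "supp \<D> {#} \<phi>"
    from \<C> \<open>\<C> \<subseteq> \<D>\<close> have \<D>: "sim_base \<subseteq> \<D>" by (rule order_trans)
    with \<open>supp \<D> {#} \<phi>\<close> have "aderiv \<D> {#} (flat \<phi>)" using simulatedD[OF \<phi>] by blast
    then show "aderiv \<D> {#} (flat (Bang \<phi>))"
      by (rule aderiv_persistent_rule[OF subsetD[OF \<D> sim_base.Prom[OF X]]])
  qed
  then have "aderiv \<C> (L + {#}) (flat (Bang \<phi>))"
    by (rule supp[unfolded supp_piece_simps, rule_format (no_asm), OF order_refl])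
  then show "aderiv \<C> L (flat (Bang \<phi>))" by simp
qed

lemma simulated: "\<chi> \<in> X \<Longrightarrow> simulated \<chi>"
proof (induction \<chi>)
  case (Lolli \<phi> \<psi>)
  then show ?case using simulated_Lolli immediate_subformulas_in by blast
next
  case (Tensor \<phi> \<psi>)
  then show ?case using simulated_Tensor immediate_subformulas_in by blast
next
  case (With \<phi> \<psi>)
  then show ?case using simulated_With immediate_subformulas_in by blast
next
  case (Plus \<phi> \<psi>)
  then show ?case using simulated_Plus immediate_subformulas_in by blast
next
  case (Bang \<phi>)
  then show ?case using simulated_Bang immediate_subformulas_in by blast
qed (simp_all add: simulated_Atom simulated_One simulated_Zero simulated_Top)

section \<open>Reading atomic derivations back as natural deductions\<close>

definition bang_axioms :: "'a form multiset \<Rightarrow> 'a arule set" where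
  "bang_axioms \<Delta> = {({#}, {#}, flat \<delta>) | \<delta>. \<delta> \<in># \<Delta>}"

lemma sim_base_nonempty_SD:
  "(A, S, p) \<in> sim_base \<union> bang_axioms \<Delta> \<Longrightarrow> S \<noteq> {#}
    \<Longrightarrow> \<exists>\<phi>. Bang \<phi> \<in> X \<and> A = {#} \<and> S = {#({#}, flat \<phi>)#} \<and> p = flat (Bang \<phi>)"
  by (auto simp: bang_axioms_def elim!: sim_base.cases)

lemma persistent_sim_baseD:
  "persistent (sim_base \<union> bang_axioms \<Delta>) d \<Longrightarrow> \<exists>\<psi>. Bang \<psi> \<in> X \<and> d = flat (Bang \<psi>)"
  unfolding persistent_def using sim_base_nonempty_SD by blast

context
  fixes \<Delta> :: "'a form multiset"
  assumes \<Delta>_in: "set_mset \<Delta> \<subseteq> X"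
begin

abbreviation nd_flat :: "'a multiset \<Rightarrow> 'a \<Rightarrow> bool" where
  "nd_flat L p \<equiv> nd (image_mset unflat L + image_mset Bang \<Delta>) (unflat p)"

text \<open>The condition is vacuous for rules with a nonempty \<open>S\<close>, that is, for promotion, which
  \<open>nd_of_aderiv\<close> treats separately.\<close>

definition sound_rule :: "'a arule \<Rightarrow> bool" where
  "sound_rule r \<longleftrightarrow> (case r of (A, S, p) \<Rightarrow> S = {#} \<longrightarrow> (\<forall>TC. mset (map fst TC) = A
     \<longrightarrow> (\<forall>(T, C) \<in> set TC. \<forall>(Q, q) \<in># T. nd_flat (C + Q) q)
     \<longrightarrow> nd_flat (sum_list (map snd TC)) p))"

lemma sound_ruleD:
  "sound_rule (A, {#}, p) \<Longrightarrow> mset (map fst TC) = A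
    \<Longrightarrow> \<forall>(T, C) \<in> set TC. \<forall>(Q, q) \<in># T. nd_flat (C + Q) q \<Longrightarrow> nd_flat (sum_list (map snd TC)) p"
  by (simp add: sound_rule_def)

lemma sound_rule_nullary: "nd_flat {#} p \<Longrightarrow> sound_rule ({#}, {#}, p)"
  by (simp add: sound_rule_def)

lemma sound_rule_unary:
  assumes "\<And>C. \<forall>(Q, q) \<in># T. nd_flat (C + Q) q \<Longrightarrow> nd_flat C p"
  shows "sound_rule ({#T#}, {#}, p)"
  unfolding sound_rule_def
proof (intro case_prodI impI allI)
  fix TC :: "('a abox \<times> 'a multiset) list"
  assume "mset (map fst TC) = {#T#}" and "\<forall>(T, C) \<in> set TC. \<forall>(Q, q) \<in># T. nd_flat (C + Q) q"
  then show "nd_flat (sum_list (map snd TC)) p"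
    using assms by (cases TC) auto
qed

lemma sound_rule_binary:
  assumes "\<And>C1 C2. \<forall>(Q, q) \<in># T1. nd_flat (C1 + Q) q \<Longrightarrow> \<forall>(Q, q) \<in># T2. nd_flat (C2 + Q) q
    \<Longrightarrow> nd_flat (C1 + C2) p"
  shows "sound_rule ({#T1, T2#}, {#}, p)"
  unfolding sound_rule_def
proof (intro case_prodI impI allI)
  fix TC :: "('a abox \<times> 'a multiset) list"
  assume TC: "mset (map fst TC) = {#T1, T2#}"
    and prems: "\<forall>(T, C) \<in> set TC. \<forall>(Q, q) \<in># T. nd_flat (C + Q) q"
  then have "length TC = 2" by (metis length_map numeral_2_eq_2 size_add_mset size_empty size_mset)
  then obtain T T' C C' where TC_eq: "TC = [(T, C), (T', C')]"
    by (auto simp: numeral_2_eq_2 length_Suc_conv)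
  with TC have "T = T1 \<and> T' = T2 \<or> T = T2 \<and> T' = T1"
    by (auto simp: add_eq_conv_ex)
  then show "nd_flat (sum_list (map snd TC)) p"
    using assms[of C C'] assms[of C' C] prems TC_eq by (auto simp: add.commute)
qed

lemma sound_rule_unary_atom:
  assumes "\<And>\<Gamma>. nd \<Gamma> (unflat a) \<Longrightarrow> nd \<Gamma> (unflat p)"
  shows "sound_rule ({#atom_box a#}, {#}, p)"
  by (rule sound_rule_unary) (simp add: assms)

lemma sound_rule_binary_atoms:
  assumes "\<And>\<Gamma>1 \<Gamma>2. nd \<Gamma>1 (unflat a) \<Longrightarrow> nd \<Gamma>2 (unflat b) \<Longrightarrow> nd (\<Gamma>1 + \<Gamma>2) (unflat p)"
  shows "sound_rule ({#atom_box a, atom_box b#}, {#}, p)"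
  by (rule sound_rule_binary) (simp add: assms nd_merge_Bangs)

lemma sound_rule_elim:
  assumes "\<And>\<Gamma>1 \<Gamma>2. nd \<Gamma>1 (unflat a) \<Longrightarrow> nd (\<Gamma>2 + image_mset unflat Q) (unflat q)
    \<Longrightarrow> nd (\<Gamma>1 + \<Gamma>2) (unflat q)"
  shows "sound_rule ({#atom_box a, {#(Q, q)#}#}, {#}, q)"
proof (rule sound_rule_binary)
  fix C1 C2
  assume "\<forall>(Q', q') \<in># atom_box a. nd_flat (C1 + Q') q'" and "\<forall>(Q', q') \<in># {#(Q, q)#}. nd_flat (C2 + Q') q'"
  then have "nd (image_mset unflat C1 + image_mset Bang \<Delta>) (unflat a)"
    and "nd ((image_mset unflat C2 + image_mset Bang \<Delta>) + image_mset unflat Q) (unflat q)"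
    by (simp_all add: ac_simps)
  then show "nd_flat (C1 + C2) q" by (simp add: assms nd_merge_Bangs)
qed

lemma sound_rule_absurd:
  assumes "unflat a = Zero"
  shows "sound_rule ({#atom_box a#} + A, {#}, p)"
  unfolding sound_rule_def
proof (intro case_prodI impI allI)
  fix TC :: "('a abox \<times> 'a multiset) list"
  assume TC: "mset (map fst TC) = {#atom_box a#} + A"
    and prems: "\<forall>(T, C) \<in> set TC. \<forall>(Q, q) \<in># T. nd_flat (C + Q) q"
  have "atom_box a \<in> fst ` set TC"
    using arg_cong[OF TC, of set_mset] by auto
  then obtain C where C: "(atom_box a, C) \<in> set TC" by force
  with prems assms have "nd (image_mset unflat C + image_mset Bang \<Delta>) Zero" by fastforce
  then have "nd (image_mset unflat (sum_list (map snd (remove1 (atom_box a, C) TC)))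
      + (image_mset unflat C + image_mset Bang \<Delta>)) (unflat p)"
    by (rule nd_Zero)
  then show "nd_flat (sum_list (map snd TC)) p"
    using sum_list_map_remove1[OF C, of snd] by (simp add: ac_simps)
qed

lemma sound_rule_sim_base: "(A, S, p) \<in> sim_base \<Longrightarrow> sound_rule (A, S, p)"
proof (induction rule: sim_base.induct)
  case (LolliI \<phi> \<psi>)
  then have "\<phi> \<in> X" "\<psi> \<in> X" by (blast intro: immediate_subformulas_in)+
  with LolliI show ?case by (intro sound_rule_unary) (simp add: nd.LolliI)
next
  case (LolliE \<phi> \<psi>)
  then have "\<phi> \<in> X" "\<psi> \<in> X" by (blast intro: immediate_subformulas_in)+
  with LolliE show ?case by (intro sound_rule_binary_atoms) (simp add: nd.LolliE)
next
  case (TensorI \<phi> \<psi>)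
  then have "\<phi> \<in> X" "\<psi> \<in> X" by (blast intro: immediate_subformulas_in)+
  with TensorI show ?case by (intro sound_rule_binary_atoms) (simp add: nd.TensorI)
next
  case (TensorE \<phi> \<psi> p)
  then have "\<phi> \<in> X" "\<psi> \<in> X" by (blast intro: immediate_subformulas_in)+
  with TensorE show ?case by (intro sound_rule_elim) (simp add: nd.TensorE)
next
  case OneI
  then show ?case using nd_weaken_Bangs[OF nd.OneI, of \<Delta>] by (intro sound_rule_nullary) simp
next
  case (OneE p)
  then show ?case by (intro sound_rule_binary_atoms) (simp add: nd.OneE)
next
  case (WithI \<phi> \<psi>)
  then have "\<phi> \<in> X" "\<psi> \<in> X" by (blast intro: immediate_subformulas_in)+
  with WithI show ?case by (intro sound_rule_unary) (simp add: nd.WithI)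
next
  case (WithE1 \<phi> \<psi>)
  then have "\<phi> \<in> X" by (blast intro: immediate_subformulas_in)
  with WithE1 show ?case by (intro sound_rule_unary_atom) (simp add: nd.WithE1)
next
  case (WithE2 \<phi> \<psi>)
  then have "\<psi> \<in> X" by (blast intro: immediate_subformulas_in)
  with WithE2 show ?case by (intro sound_rule_unary_atom) (simp add: nd.WithE2)
next
  case (PlusI1 \<phi> \<psi>)
  then have "\<phi> \<in> X" by (blast intro: immediate_subformulas_in)
  with PlusI1 show ?case by (intro sound_rule_unary_atom) (simp add: nd.PlusI1)
next
  case (PlusI2 \<phi> \<psi>)
  then have "\<psi> \<in> X" by (blast intro: immediate_subformulas_in)
  with PlusI2 show ?case by (intro sound_rule_unary_atom) (simp add: nd.PlusI2)
next
  case (PlusE \<phi> \<psi> p)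
  then have "\<phi> \<in> X" "\<psi> \<in> X" by (blast intro: immediate_subformulas_in)+
  with PlusE show ?case
    by (intro sound_rule_binary) (simp add: nd_merge_Bangs nd.PlusE)
next
  case (TopI Q)
  then show ?case by (simp add: sound_rule_def nd_Top)
next
  case (ZeroE Q p)
  then show ?case by (intro sound_rule_absurd) simp
next
  case (Prom \<phi>)
  then show ?case by (simp add: sound_rule_def)
next
  case (Der \<phi> p)
  then have "\<phi> \<in> X" by (blast intro: immediate_subformulas_in)
  with Der show ?case by (intro sound_rule_elim) (simp add: nd.Der)
next
  case (Wk \<phi> p)
  then show ?case by (intro sound_rule_binary_atoms) (simp add: nd.Wk)
next
  case (Ctr \<phi> p)
  then show ?case by (intro sound_rule_elim) (simp add: nd.Ctr)
qed

lemma sound_rule_base: "(A, S, p) \<in> sim_base \<union> bang_axioms \<Delta> \<Longrightarrow> sound_rule (A, S, p)"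
proof (elim UnE)
  assume "(A, S, p) \<in> bang_axioms \<Delta>"
  with \<Delta>_in show "sound_rule (A, S, p)"
    by (auto simp: bang_axioms_def intro!: sound_rule_nullary nd_Der_Bangs)
qed (rule sound_rule_sim_base)

lemma nd_of_aderiv: "aderiv (sim_base \<union> bang_axioms \<Delta>) L p \<Longrightarrow> nd_flat L p"
proof (induction rule: aderiv.induct)
  case (Ref q)
  show ?case using nd_weaken_Bangs[OF nd.Ax] by simp
next
  case (App A S p TC DC)
  define ps where "ps = map (\<lambda>(d, C). (image_mset unflat C, unflat d)) DC"
  have ps: "\<forall>(\<Gamma>', \<beta>) \<in> set ps. is_bang \<beta> \<and> nd (\<Gamma>' + image_mset Bang \<Delta>) \<beta>"
  proof (clarsimp simp: ps_def)
    fix d C assume "(d, C) \<in> set DC"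
    with App.hyps(3) App.IH(2) obtain \<psi> where "Bang \<psi> \<in> X" "d = flat (Bang \<psi>)" and "nd_flat C d"
      using persistent_sim_baseD by fastforce
    then show "is_bang (unflat d) \<and> nd (image_mset unflat C + image_mset Bang \<Delta>) (unflat d)" by simp
  qed
  have DC: "sum_list (map fst ps) = image_mset unflat (sum_list (map snd DC))"
    by (simp add: ps_def comp_def case_prod_beta image_mset_sum_list)
  show ?case
  proof (cases "S = {#}")
    case True
    have "nd_flat (sum_list (map snd TC)) p"
      by (rule sound_ruleD[OF sound_rule_base[OF App.hyps(1)[unfolded True]] App.hyps(2)])
        (use App.IH(1) in fastforce)
    from nd_weaken_derived_Bangs[OF ps this] DC show ?thesis by simp
  next
    case False
    \<comment> \<open>promotion: the discharged persistent atoms supply the boxed premises of \<open>Prom\<close>\<close>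
    with App.hyps(1) obtain \<phi> where \<phi>: "Bang \<phi> \<in> X" "A = {#}" "S = {#({#}, flat \<phi>)#}" "p = flat (Bang \<phi>)"
      using sim_base_nonempty_SD by blast
    have "nd (mset (map snd ps) + image_mset Bang \<Delta>) \<phi>"
      using App.IH(3) \<phi> immediate_subformulas_in(9)[OF \<phi>(1)]
      by (simp add: ps_def comp_def case_prod_beta image_mset.compositionality)
    from nd_Prom_Bangs[OF ps this] \<phi> DC App.hyps(2) show ?thesis by simp
  qed
qed

end

lemma aderiv_flat_of_ante_supp:
  assumes supp: "ante_supp (sim_base \<union> bang_axioms \<Delta>) (\<Theta> + image_mset Bang \<Delta>) {#} \<phi>"
    and \<Theta>: "\<forall>\<theta> \<in># \<Theta>. \<theta> \<in> X \<and> \<not> is_bang \<theta>" and \<Delta>: "set_mset \<Delta> \<subseteq> X" and "\<phi> \<in> X"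
  shows "aderiv (sim_base \<union> bang_axioms \<Delta>) (image_mset flat \<Theta>) (flat \<phi>)"
proof -
  let ?\<B> = "sim_base \<union> bang_axioms \<Delta>"
  have \<B>: "sim_base \<subseteq> ?\<B>" by blast
  obtain \<theta>s \<delta>s where \<theta>s: "mset \<theta>s = \<Theta>" and \<delta>s: "mset \<delta>s = \<Delta>" by (metis ex_mset)
  define ks where "ks = map (\<lambda>\<theta>. (\<theta>, {#flat \<theta>#})) \<theta>s @ map (\<lambda>\<delta>. (Bang \<delta>, {#})) \<delta>s"
  have "piece ?\<B> \<theta> {#flat \<theta>#}" if "\<theta> \<in># \<Theta>" for \<theta>
    using \<Theta> that simulatedD[OF simulated \<B>, of \<theta> "{#flat \<theta>#}"] aderiv.Ref[of ?\<B> "flat \<theta>"]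
    by (simp add: piece_nonbang)
  moreover have "supp ?\<B> {#} \<delta>" if "\<delta> \<in># \<Delta>" for \<delta>
  proof -
    have "aderiv ?\<B> {#} (flat \<delta>)" using that by (intro aderiv_rule0) (auto simp: bang_axioms_def)
    with \<Delta> that show ?thesis using simulatedD[OF simulated \<B>] by auto
  qed
  ultimately have "\<forall>(\<theta>, K) \<in> set ks. piece ?\<B> \<theta> K"
    using \<theta>s \<delta>s by (auto simp: ks_def)
  from ante_suppD[OF supp order_refl _ this] \<theta>s \<delta>s
  have "supp ?\<B> (image_mset flat \<Theta>) \<phi>" by (simp add: ks_def comp_def)
  with \<open>\<phi> \<in> X\<close> show ?thesis using simulatedD[OF simulated \<B>] by blast
qed

lemma nd_of_valid:
  assumes "valid \<Gamma> \<phi>" and "\<phi> \<in> X" and "set_mset \<Gamma> \<subseteq> X"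
  shows "nd \<Gamma> \<phi>"
proof -
  define \<Theta> where "\<Theta> = filter_mset (\<lambda>\<theta>. \<not> is_bang \<theta>) \<Gamma>"
  define \<Delta> where "\<Delta> = image_mset unbang (filter_mset is_bang \<Gamma>)"
  have Bangs: "image_mset Bang \<Delta> = filter_mset is_bang \<Gamma>"
    unfolding \<Delta>_def by (induction \<Gamma>) (auto simp: Bang_unbang)
  then have \<Gamma>: "\<Gamma> = \<Theta> + image_mset Bang \<Delta>"
    using multiset_partition[of \<Gamma> is_bang] by (simp add: \<Theta>_def add.commute)
  have \<Theta>_in: "\<forall>\<theta> \<in># \<Theta>. \<theta> \<in> X \<and> \<not> is_bang \<theta>" using assms(3) by (auto simp: \<Theta>_def)
  have \<Delta>_in: "set_mset \<Delta> \<subseteq> X"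
  proof
    fix \<delta> assume "\<delta> \<in># \<Delta>"
    then have "Bang \<delta> \<in># \<Gamma>" using arg_cong[OF Bangs, of set_mset] by auto
    with assms(3) show "\<delta> \<in> X" using immediate_subformulas_in(9) by blast
  qed
  from assms(1) have "aderiv (sim_base \<union> bang_axioms \<Delta>) (image_mset flat \<Theta>) (flat \<phi>)"
    unfolding valid_def \<Gamma> by (intro aderiv_flat_of_ante_supp \<Theta>_in \<Delta>_in assms(2)) blast
  then have "nd (image_mset unflat (image_mset flat \<Theta>) + image_mset Bang \<Delta>) (unflat (flat \<phi>))"
    by (rule nd_of_aderiv[OF \<Delta>_in])
  moreover have "image_mset unflat (image_mset flat \<Theta>) = \<Theta>"
    using \<Theta>_in by (induction \<Theta>) auto
  ultimately show ?thesis using assms(2) \<Gamma> by simp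
qed

end

lemma flattening_exists:
  assumes inf: "infinite (UNIV :: 'a set)" and fin: "finite X"
    and closed: "\<And>\<chi>. \<chi> \<in> X \<Longrightarrow> subformulas \<chi> \<subseteq> X"
  shows "\<exists>flat unflat. flattening flat unflat (X :: 'a form set)"
proof -
  define At where "At = {q. Atom q \<in> X}"
  have "finite At"
    using finite_vimageI[OF fin, of Atom] by (simp add: At_def vimage_def inj_def)
  with inf obtain g :: "nat \<Rightarrow> 'a" where g: "inj g" "range g \<subseteq> - At"
    using infinite_countable_subset[of "- At"] by (auto simp: Compl_eq_Diff_UNIV)
  obtain i :: "'a form \<Rightarrow> nat" where i: "inj_on i X"
    using finite_imp_inj_to_nat_seg[OF fin] by blast
  define flat where "flat \<chi> = (case \<chi> of Atom q \<Rightarrow> q | _ \<Rightarrow> g (i \<chi>))" for \<chi>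
  have flat_nonatom: "\<chi> \<notin> range Atom \<Longrightarrow> flat \<chi> = g (i \<chi>)" for \<chi>
    by (cases \<chi>) (auto simp: flat_def)
  have "inj_on flat X"
  proof (rule inj_onI)
    fix x y assume x: "x \<in> X" and y: "y \<in> X" and eq: "flat x = flat y"
    have fresh: "\<chi> \<in> X \<Longrightarrow> \<chi> \<notin> range Atom \<Longrightarrow> Atom (flat \<chi>) \<notin> X" for \<chi>
      using g(2) by (auto simp: flat_nonatom At_def)
    show "x = y"
    proof (cases "x \<in> range Atom"; cases "y \<in> range Atom")
      assume "x \<notin> range Atom" "y \<notin> range Atom"
      with eq x y show "x = y" using g(1) i by (simp add: flat_nonatom inj_eq inj_on_eq_iff)
    qed (use x y eq fresh in \<open>auto simp: flat_def\<close>)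
  qed
  then have "flattening flat (inv_into X flat) X"
    by unfold_locales (simp_all add: closed flat_def[of "Atom _"])
  then show ?thesis by blast
qed

theorem theorem7:
  fixes \<Gamma> :: "'a form multiset" and \<phi> :: "'a form"
  assumes "infinite (UNIV :: 'a set)"
    and "valid \<Gamma> \<phi>"
  shows "nd \<Gamma> \<phi>"
proof -
  define X where "X = subformulas \<phi> \<union> (\<Union>\<chi> \<in> set_mset \<Gamma>. subformulas \<chi>)"
  have "finite X" by (simp add: X_def finite_subformulas)
  moreover have "\<chi> \<in> X \<Longrightarrow> subformulas \<chi> \<subseteq> X" for \<chi>
    using subformulas_trans by (fastforce simp: X_def)
  ultimately obtain flat unflat where "flattening flat unflat X"
    using flattening_exists[OF assms(1)] by blast
  moreover have "\<phi> \<in> X" and "set_mset \<Gamma> \<subseteq> X"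
    using subformulas_refl by (auto simp: X_def)
  ultimately show ?thesis using flattening.nd_of_valid[OF _ assms(2)] by blast
qed

end
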